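(* For every integer $n\ge2$, $\hat E_{2,n}(q)=\sum_{i=0}^{n-2}\binom{n}{i+2}q^i$.
   Context: Place $1,\dots,n$ clockwise on a circle. Distinct $p_1,\dots,p_m$ are in clockwise cyclic order if $(p_2-p_1)\bmod n<\dots<(p_m-p_1)\bmod n$ (residues in $\{0,\dots,n-1\}$). For $\pi\in S_n$ (fixed points regarded as "counterclockwise loops"), an ordered pair $(i,j)$, $i\ne j$, is aligned if $\pi(j)\ne j$, the entries of $(i,\pi(i),\pi(j),j)$ are pairwise distinct except that possibly $i=\pi(i)$, and the distinct entries in this order are in clockwise cyclic order. An alignment is an unordered pair $\{i,j\}$ with $(i,j)$ or $(j,i)$ aligned; $\mathrm{al}(\pi)$ is their number. A weak excedence of $\pi$ is an $i$ with $\pi(i)\ge i$. $E_{k,n}(q)=\sum q^{k(n-k)-\mathrm{al}(\pi)}$ over $\pi\in S_n$ with exactly $k$ weak excedences, and $\hat E_{k,n}(q)=q^{k-n}E_{k,n}(q)$. *)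

theory Defs
  imports Complex_Main "HOL-Combinatorics.Permutations"
begin

text \<open>Clockwise cyclic order of a list of points among 1..n placed on a circle:
  the residues (p_k - p_1) mod n are strictly increasing.\<close>
definition cw_order :: "nat \<Rightarrow> nat list \<Rightarrow> bool" where
  "cw_order n ps \<longleftrightarrow>
     sorted_wrt (<) (map (\<lambda>p. (int p - int (hd ps)) mod int n) ps)"

definition align_list :: "(nat \<Rightarrow> nat) \<Rightarrow> nat \<Rightarrow> nat \<Rightarrow> nat list" where
  "align_list \<pi> i j = (if \<pi> i = i then [i, \<pi> j, j] else [i, \<pi> i, \<pi> j, j])"

definition aligned :: "nat \<Rightarrow> (nat \<Rightarrow> nat) \<Rightarrow> nat \<Rightarrow> nat \<Rightarrow> bool" where
  "aligned n \<pi> i j \<longleftrightarrow> i \<noteq> j \<and> \<pi> j \<noteq> j \<and>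
     distinct (align_list \<pi> i j) \<and> cw_order n (align_list \<pi> i j)"

definition al :: "nat \<Rightarrow> (nat \<Rightarrow> nat) \<Rightarrow> nat" where
  "al n \<pi> = card {{i, j} | i j. i \<in> {1..n} \<and> j \<in> {1..n} \<and>
                    (aligned n \<pi> i j \<or> aligned n \<pi> j i)}"

definition wex :: "nat \<Rightarrow> (nat \<Rightarrow> nat) \<Rightarrow> nat" where
  "wex n \<pi> = card {i \<in> {1..n}. \<pi> i \<ge> i}"

definition E :: "nat \<Rightarrow> nat \<Rightarrow> real \<Rightarrow> real" where
  "E k n q = (\<Sum>\<pi> \<in> {\<pi>. \<pi> permutes {1..n} \<and> wex n \<pi> = k}.
                q powi (int (k * (n - k)) - int (al n \<pi>)))"

definition Ehat :: "nat \<Rightarrow> nat \<Rightarrow> real \<Rightarrow> real" where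
  "Ehat k n q = q powi (int k - int n) * E k n q"

end

(*
  Let R = down_cycle {1..n} be the rotation x |-> x - 1 (mod n). A permutation pi of {1..n}
  has one more weak excedence than rho = R^-1 o pi has excedences, so pi has exactly two weak
  excedences iff rho has exactly one. Such a rho is the cycle running through its support S in
  decreasing order: rho x never exceeds the cyclic predecessor of x in S, and two bijections of
  a finite set that are pointwise ordered coincide because their sums agree. So these
  permutations correspond to the subsets S of {1..n} with at least two elements.
  Measuring clockwise distances from i shows that (i, j) is aligned for the permutation of S
  iff j is not in S and i is the first element of S clockwise after j. Hence al = n - |S|,
  the subset S contributes q^(|S| - 2) to Ehat 2 n, and grouping subsets by size gives the
  binomial sum.
*)

theory Submission
  imports Defs
begin

definition cyc_prev :: "'a::linorder set \<Rightarrow> 'a \<Rightarrow> 'a" where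
  "cyc_prev S x = (if \<exists>y\<in>S. y < x then Max {y\<in>S. y < x} else Max S)"

definition cyc_next :: "'a::linorder set \<Rightarrow> 'a \<Rightarrow> 'a" where
  "cyc_next S x = (if \<exists>y\<in>S. x < y then Min {y\<in>S. x < y} else Min S)"

definition down_cycle :: "'a::linorder set \<Rightarrow> 'a \<Rightarrow> 'a" where
  "down_cycle S x = (if x \<in> S then cyc_prev S x else x)"

lemma cyc_prev_in: "finite S \<Longrightarrow> S \<noteq> {} \<Longrightarrow> cyc_prev S x \<in> S"
  using Max_in[of "{y\<in>S. y < x}"] Max_in[of S] by (auto simp: cyc_prev_def)

lemma cyc_prev_below:
  assumes "finite S" "y \<in> S" "y < x"
  shows "cyc_prev S x < x" and "y \<le> cyc_prev S x"
proof -
  have fin: "finite {y\<in>S. y < x}" and y: "y \<in> {y\<in>S. y < x}"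
    using assms by auto
  have "cyc_prev S x = Max {y\<in>S. y < x}"
    using assms by (auto simp: cyc_prev_def)
  moreover have "Max {y\<in>S. y < x} \<in> {y\<in>S. y < x}"
    using Max_in[OF fin] y by blast
  ultimately show "cyc_prev S x < x" and "y \<le> cyc_prev S x"
    using Max_ge[OF fin y] by auto
qed

lemma cyc_prev_Min: "finite S \<Longrightarrow> S \<noteq> {} \<Longrightarrow> cyc_prev S (Min S) = Max S"
  unfolding cyc_prev_def by (auto simp: not_less)

lemma Min_less_Max:
  assumes "finite S" "2 \<le> card S"
  shows "Min S < Max S"
proof -
  have "\<not> S \<subseteq> {Min S}"
    using assms card_mono[of "{Min S}" S] by fastforce
  then obtain y where "y \<in> S" "y \<noteq> Min S"
    by blast
  then have "Min S < y" "y \<le> Max S"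
    using assms by (auto simp: order_le_neq_trans)
  then show ?thesis
    by simp
qed

lemma cyc_prev_neq:
  assumes "finite S" "2 \<le> card S" "x \<in> S"
  shows "cyc_prev S x \<noteq> x"
proof (cases "x = Min S")
  case True
  then show ?thesis
    using assms Min_less_Max cyc_prev_Min by fastforce
next
  case False
  then have "Min S < x"
    using assms by (simp add: order_le_neq_trans)
  then show ?thesis
    using cyc_prev_below(1) assms Min_in by fastforce
qed

lemma inj_on_cyc_prev:
  assumes "finite S"
  shows "inj_on (cyc_prev S) S"
proof -
  have images_differ: "cyc_prev S u \<noteq> cyc_prev S v" if "u \<in> S" "v \<in> S" "u < v" for u v
  proof -
    have nonempty: "S \<noteq> {}"
      using that by blast
    have "u \<le> cyc_prev S v" "cyc_prev S v < v"
      using cyc_prev_below[OF assms that(1,3)] by auto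
    moreover have "cyc_prev S u < u \<or> cyc_prev S u = Max S"
    proof (cases "u = Min S")
      case True
      then show ?thesis
        using cyc_prev_Min[OF assms nonempty] by simp
    next
      case False
      then have "Min S < u"
        using Min_le[OF assms that(1)] by simp
      then show ?thesis
        using cyc_prev_below(1)[OF assms Min_in[OF assms nonempty]] by blast
    qed
    moreover have "v \<le> Max S"
      using Max_ge[OF assms that(2)] .
    ultimately show ?thesis
      by auto
  qed
  show ?thesis
  proof (rule inj_onI)
    fix u v
    assume "u \<in> S" "v \<in> S" "cyc_prev S u = cyc_prev S v"
    then show "u = v"
      by (cases u v rule: linorder_cases) (auto dest: images_differ)
  qed
qed

lemma bij_betw_cyc_prev:
  assumes "finite S"
  shows "bij_betw (cyc_prev S) S S"
proof -
  have "cyc_prev S ` S \<subseteq> S"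
    using cyc_prev_in[OF assms] by blast
  then show ?thesis
    using endo_inj_surj[OF assms] inj_on_cyc_prev[OF assms] by (simp add: bij_betw_def)
qed

lemma cyc_next_in: "finite S \<Longrightarrow> S \<noteq> {} \<Longrightarrow> cyc_next S x \<in> S"
  using Min_in[of "{y\<in>S. x < y}"] Min_in[of S] by (auto simp: cyc_next_def)

lemma cyc_next_above:
  assumes "finite S" "y \<in> S" "x < y"
  shows "x < cyc_next S x" and "cyc_next S x \<le> y"
proof -
  have fin: "finite {y\<in>S. x < y}" and y: "y \<in> {y\<in>S. x < y}"
    using assms by auto
  have "cyc_next S x = Min {y\<in>S. x < y}"
    using assms by (auto simp: cyc_next_def)
  moreover have "Min {y\<in>S. x < y} \<in> {y\<in>S. x < y}"
    using Min_in[OF fin] y by blast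
  ultimately show "x < cyc_next S x" and "cyc_next S x \<le> y"
    using Min_le[OF fin y] by auto
qed

lemma down_cycle_permutes:
  assumes "finite S" "S \<subseteq> A"
  shows "down_cycle S permutes A"
proof -
  have "bij_betw (down_cycle S) S S"
    using bij_betw_cyc_prev[OF assms(1)] by (rule bij_betw_cong[THEN iffD1, rotated]) (simp add: down_cycle_def)
  then have "down_cycle S permutes S"
    by (rule bij_imp_permutes) (simp add: down_cycle_def)
  then show ?thesis
    using assms(2) by (rule permutes_subset)
qed

lemma down_cycle_support:
  assumes "finite S" "2 \<le> card S"
  shows "{x. down_cycle S x \<noteq> x} = S"
  using cyc_prev_neq[OF assms] by (auto simp: down_cycle_def)

lemma down_cycle_excedences:
  assumes "finite S" "2 \<le> card S"
  shows "{x. x < down_cycle S x} = {Min S}"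
proof -
  have "x < cyc_prev S x \<longleftrightarrow> x = Min S" if "x \<in> S" for x
  proof (cases "x = Min S")
    case True
    then show ?thesis
      using assms Min_less_Max cyc_prev_Min by fastforce
  next
    case False
    then have "Min S < x"
      using assms that by (simp add: order_le_neq_trans)
    then show ?thesis
      using False cyc_prev_below(1) assms Min_in by fastforce
  qed
  moreover have "Min S \<in> S"
    using assms by (auto intro: Min_in)
  ultimately show ?thesis
    by (auto simp: down_cycle_def)
qed

lemma down_cycle_atLeastAtMost:
  fixes n x :: nat
  assumes "x \<in> {1..n}"
  shows "down_cycle {1..n} x = (if x = 1 then n else x - 1)"
proof (cases "x = 1")
  case True
  have "Min {1..n} = 1" "Max {1..n} = n"
    using assms by (auto intro: Min_eqI Max_eqI)
  then show ?thesis
    using True assms cyc_prev_Min[of "{1..n}"] by (simp add: down_cycle_def)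
next
  case False
  then have "x - 1 \<in> {1..n}" "x - 1 < x"
    using assms by auto
  then have "cyc_prev {1..n} x < x" "x - 1 \<le> cyc_prev {1..n} x"
    by (rule cyc_prev_below[OF finite_atLeastAtMost])+
  then show ?thesis
    using assms False by (simp add: down_cycle_def)
qed

lemma bij_betw_le_imp_eq:
  fixes f g :: "'a \<Rightarrow> 'b::ordered_cancel_comm_monoid_add"
  assumes "finite A" "bij_betw f A B" "bij_betw g A B" "\<forall>x\<in>A. f x \<le> g x" "x \<in> A"
  shows "f x = g x"
proof (rule ccontr)
  assume "f x \<noteq> g x"
  then have "sum f A < sum g A"
    using assms by (intro sum_strict_mono_ex1) (auto simp: order_less_le)
  moreover have "sum f A = sum g A"
    using sum.reindex_bij_betw[OF assms(2), of id] sum.reindex_bij_betw[OF assms(3), of id] by simp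
  ultimately show False
    by simp
qed

lemma one_excedence_le_down_cycle:
  fixes \<rho> :: "'a::linorder \<Rightarrow> 'a"
  assumes "finite {x. \<rho> x \<noteq> x}" "inj \<rho>" "{x. x < \<rho> x} = {e}"
  shows "\<rho> x \<le> down_cycle {x. \<rho> x \<noteq> x} x"
proof -
  define S where "S = {x. \<rho> x \<noteq> x}"
  have fin: "finite S"
    using assms(1) by (simp add: S_def)
  have closed: "\<rho> y \<in> S" if "y \<in> S" for y
    using that assms(2) by (auto simp: S_def dest: injD)
  have eS: "e \<in> S"
    using assms(3) by (auto simp: S_def)
  then have nonempty: "S \<noteq> {}"
    by blast
  have "Min S \<le> \<rho> (Min S)" "Min S \<noteq> \<rho> (Min S)"
    using Min_in[OF fin nonempty] Min_le[OF fin closed] by (auto simp: S_def)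
  then have "Min S < \<rho> (Min S)"
    by (rule order_le_neq_trans)
  then have Min_eq: "Min S = e"
    using assms(3) by blast
  consider "x \<notin> S" | "x = e" | "x \<in> S" "x \<noteq> e"
    by blast
  then have "\<rho> x \<le> down_cycle S x"
  proof cases
    case 1
    then show ?thesis
      by (simp add: S_def down_cycle_def)
  next
    case 2
    then have "down_cycle S x = Max S"
      using eS Min_eq cyc_prev_Min[OF fin nonempty] by (simp add: down_cycle_def)
    then show ?thesis
      using 2 Max_ge[OF fin closed[OF eS]] by simp
  next
    case 3
    then have "\<not> x < \<rho> x" "\<rho> x \<noteq> x"
      using assms(3) by (auto simp: S_def)
    then have "\<rho> x < x"
      using linorder_neqE by blast
    then show ?thesis
      using 3 cyc_prev_below(2)[OF fin closed] by (simp add: down_cycle_def)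
  qed
  then show ?thesis
    by (simp add: S_def)
qed

lemma one_excedence_eq_down_cycle:
  fixes \<rho> :: "'a::{linorder, ordered_cancel_comm_monoid_add} \<Rightarrow> 'a"
  assumes "finite A" "\<rho> permutes A" "card {x. x < \<rho> x} = 1"
  shows "2 \<le> card {x. \<rho> x \<noteq> x}" and "\<rho> = down_cycle {x. \<rho> x \<noteq> x}"
proof -
  define S where "S = {x. \<rho> x \<noteq> x}"
  obtain e where exc: "{x. x < \<rho> x} = {e}"
    using assms(3) card_1_singletonE by blast
  have inj: "inj \<rho>"
    using permutes_inj[OF assms(2)] .
  have "S \<subseteq> A"
    using permutes_not_in[OF assms(2)] by (auto simp: S_def)
  then have fin: "finite S"
    using assms(1) finite_subset by blast
  have "e < \<rho> e"
    using exc by blast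
  then have "e \<noteq> \<rho> e" "\<rho> (\<rho> e) \<noteq> \<rho> e"
    using injD[OF inj, of "\<rho> e" e] by auto
  then have "card {e, \<rho> e} = 2" "{e, \<rho> e} \<subseteq> S"
    by (auto simp: S_def)
  then have "2 \<le> card S"
    using card_mono[OF fin] by metis
  then show "2 \<le> card {x. \<rho> x \<noteq> x}"
    by (simp add: S_def)
  have "bij_betw \<rho> A A" "bij_betw (down_cycle S) A A"
    using assms(2) down_cycle_permutes[OF fin \<open>S \<subseteq> A\<close>] by (auto intro: permutes_imp_bij)
  moreover have "\<forall>x\<in>A. \<rho> x \<le> down_cycle S x"
    using one_excedence_le_down_cycle[OF _ inj exc] fin by (simp add: S_def)
  ultimately have "\<rho> x = down_cycle S x" if "x \<in> A" for x
    using bij_betw_le_imp_eq[OF assms(1)] that by blast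
  moreover have "\<rho> x = down_cycle S x" if "x \<notin> A" for x
    using that \<open>S \<subseteq> A\<close> permutes_not_in[OF assms(2)] by (auto simp: down_cycle_def)
  ultimately show "\<rho> = down_cycle {x. \<rho> x \<noteq> x}"
    unfolding S_def by blast
qed

lemma wex_down_cycle_comp:
  assumes "1 \<le> n" "\<rho> permutes {1..n}"
  shows "wex n (down_cycle {1..n} \<circ> \<rho>) = Suc (card {x. x < \<rho> x})"
proof -
  have \<rho>_in: "\<rho> x \<in> {1..n}" if "x \<in> {1..n}" for x
    using that permutes_in_image[OF assms(2)] by blast
  have excedences: "{x. x < \<rho> x} \<subseteq> {1..n}"
    using permutes_not_in[OF assms(2)] by force
  have inv_1: "inv \<rho> 1 \<in> {1..n}" "\<rho> (inv \<rho> 1) = 1"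
    using assms permutes_in_image[OF assms(2), of "inv \<rho> 1"] permutes_inverses(1)[OF assms(2)]
    by auto
  have "(down_cycle {1..n} \<circ> \<rho>) x \<ge> x \<longleftrightarrow> x = inv \<rho> 1 \<or> x < \<rho> x" if "x \<in> {1..n}" for x
  proof -
    have "x = inv \<rho> 1 \<longleftrightarrow> \<rho> x = 1"
      by (metis permutes_inverses(1,2)[OF assms(2)])
    then show ?thesis
      using that \<rho>_in[OF that] down_cycle_atLeastAtMost[OF \<rho>_in[OF that]]
      by (cases "\<rho> x = 1") auto
  qed
  then have "{i \<in> {1..n}. (down_cycle {1..n} \<circ> \<rho>) i \<ge> i} = insert (inv \<rho> 1) {x. x < \<rho> x}"
    using excedences inv_1(1) by auto
  moreover have "inv \<rho> 1 \<notin> {x. x < \<rho> x}" "finite {x. x < \<rho> x}"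
    using inv_1 excedences finite_subset by auto
  ultimately show ?thesis
    by (simp add: wex_def)
qed

lemma wex_2_permutations:
  assumes "1 \<le> n"
  shows "{\<pi>. \<pi> permutes {1..n} \<and> wex n \<pi> = 2} =
    (\<lambda>S. down_cycle {1..n} \<circ> down_cycle S) ` {S. S \<subseteq> {1..n} \<and> 2 \<le> card S}"
    (is "?P = ?Q")
proof -
  have R: "down_cycle {1..n} permutes {1..n}"
    by (rule down_cycle_permutes) simp_all
  show ?thesis
  proof (intro equalityI subsetI)
    fix \<pi>
    assume "\<pi> \<in> ?P"
    then have \<pi>: "\<pi> permutes {1..n}" "wex n \<pi> = 2"
      by auto
    define \<rho> where "\<rho> = inv (down_cycle {1..n}) \<circ> \<pi>"
    have \<rho>: "\<rho> permutes {1..n}"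
      unfolding \<rho>_def using permutes_compose[OF \<pi>(1) permutes_inv[OF R]] .
    have \<pi>_eq: "\<pi> = down_cycle {1..n} \<circ> \<rho>"
      using permutes_inverses(1)[OF R] by (simp add: \<rho>_def fun_eq_iff)
    then have "card {x. x < \<rho> x} = 1"
      using wex_down_cycle_comp[OF assms \<rho>] \<pi>(2) by simp
    then have "2 \<le> card {x. \<rho> x \<noteq> x}" "\<rho> = down_cycle {x. \<rho> x \<noteq> x}"
      using one_excedence_eq_down_cycle[OF finite_atLeastAtMost \<rho>] by auto
    moreover have "{x. \<rho> x \<noteq> x} \<subseteq> {1..n}"
      using permutes_not_in[OF \<rho>] by blast
    ultimately show "\<pi> \<in> ?Q"
      using \<pi>_eq by (intro image_eqI[where x = "{x. \<rho> x \<noteq> x}"]) auto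
  next
    fix \<pi>
    assume "\<pi> \<in> ?Q"
    then obtain S where S: "S \<subseteq> {1..n}" "2 \<le> card S" and \<pi>: "\<pi> = down_cycle {1..n} \<circ> down_cycle S"
      by blast
    have fin: "finite S"
      using S(1) finite_subset by blast
    have "\<pi> permutes {1..n}"
      unfolding \<pi> using permutes_compose[OF down_cycle_permutes[OF fin S(1)] R] .
    moreover have "wex n \<pi> = 2"
      unfolding \<pi> wex_down_cycle_comp[OF assms down_cycle_permutes[OF fin S(1)]]
      using down_cycle_excedences[OF fin S(2)] by simp
    ultimately show "\<pi> \<in> ?P"
      by simp
  qed
qed

lemma inj_on_down_cycle_comp:
  fixes n :: nat
  shows "inj_on (\<lambda>S. down_cycle {1..n} \<circ> down_cycle S) {S. finite S \<and> 2 \<le> card S}"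
proof (rule inj_onI)
  fix S T
  assume S: "S \<in> {S. finite S \<and> 2 \<le> card S}" and T: "T \<in> {S. finite S \<and> 2 \<le> card S}"
    and eq: "down_cycle {1..n} \<circ> down_cycle S = down_cycle {1..n} \<circ> down_cycle T"
  have inj: "inj (down_cycle {1..n})"
    using permutes_inj[OF down_cycle_permutes[OF finite_atLeastAtMost order_refl]] .
  have "down_cycle S x = down_cycle T x" for x
  proof (rule injD[OF inj])
    show "down_cycle {1..n} (down_cycle S x) = down_cycle {1..n} (down_cycle T x)"
      using fun_cong[OF eq, of x] by simp
  qed
  then have "{x. down_cycle S x \<noteq> x} = {x. down_cycle T x \<noteq> x}"
    by simp
  moreover have "{x. down_cycle S x \<noteq> x} = S" "{x. down_cycle T x \<noteq> x} = T"
    using down_cycle_support S T by auto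
  ultimately show "S = T"
    by simp
qed

definition cw_dist :: "nat \<Rightarrow> nat \<Rightarrow> nat \<Rightarrow> int" where
  "cw_dist n a b = (int b - int a) mod int n"

lemma cw_dist_bounds: "0 < n \<Longrightarrow> 0 \<le> cw_dist n a b \<and> cw_dist n a b < int n"
  by (simp add: cw_dist_def)

lemma cw_dist_eq:
  assumes "a \<in> {1..n}" "b \<in> {1..n}"
  shows "cw_dist n a b = (if a \<le> b then int b - int a else int b + int n - int a)"
proof (cases "a \<le> b")
  case True
  then show ?thesis
    using assms by (simp add: cw_dist_def)
next
  case False
  have "(int b - int a) mod int n = (int b - int a + int n) mod int n"
    by simp
  also have "\<dots> = int b - int a + int n"
    using assms False by (intro mod_pos_pos_trivial) auto
  finally show ?thesis
    using False by (simp add: cw_dist_def)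
qed

lemma cw_dist_eq_iff:
  assumes "a \<in> {1..n}" "b \<in> {1..n}" "c \<in> {1..n}"
  shows "cw_dist n a b = cw_dist n a c \<longleftrightarrow> b = c"
  using assms by (auto simp: cw_dist_eq split: if_splits)

lemma aligned_iff_cw_dist:
  assumes "i \<in> {1..n}" "j \<in> {1..n}" "\<pi> i \<in> {1..n}" "\<pi> j \<in> {1..n}"
  shows "aligned n \<pi> i j \<longleftrightarrow>
    cw_dist n i (\<pi> i) < cw_dist n i (\<pi> j) \<and> cw_dist n i (\<pi> j) < cw_dist n i j"
proof -
  have eq_iff: "x = y \<longleftrightarrow> cw_dist n i x = cw_dist n i y" if "x \<in> {1..n}" "y \<in> {1..n}" for x y
    using cw_dist_eq_iff[OF assms(1) that] by simp
  have "0 \<le> cw_dist n i (\<pi> i)" "0 \<le> cw_dist n i (\<pi> j)" "0 \<le> cw_dist n i j"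
    using assms(1) cw_dist_bounds by auto
  moreover have "cw_dist n i i = 0"
    by (simp add: cw_dist_def)
  \<comment> \<open>\<open>cw_dist n i i = 0\<close> absorbs the entry of \<open>align_list\<close> merged when \<open>\<pi> i = i\<close>\<close>
  ultimately show ?thesis
    using assms unfolding aligned_def align_list_def cw_order_def
    by (auto simp: cw_dist_def[symmetric] eq_iff[OF assms(1)] eq_iff[OF assms(1) assms(2)]
        eq_iff[OF assms(3)] eq_iff[OF assms(4)] eq_iff[OF _ assms(2)])
qed

lemma cw_dist_down_cycle:
  assumes "2 \<le> n" "i \<in> {1..n}" "y \<in> {1..n}"
  shows "cw_dist n i (down_cycle {1..n} y) = (if y = i then int n - 1 else cw_dist n i y - 1)"
proof (cases "y = 1")
  case True
  have "down_cycle {1..n} y = n" "n \<in> {1..n}"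
    using True assms down_cycle_atLeastAtMost[OF assms(3)] by auto
  then show ?thesis
    using True assms cw_dist_eq[OF assms(2)] by auto
next
  case False
  then have "down_cycle {1..n} y = y - 1" "y - 1 \<in> {1..n}"
    using assms down_cycle_atLeastAtMost[OF assms(3)] by auto
  then show ?thesis
    using False assms cw_dist_eq[OF assms(2)] by auto
qed

lemma cw_dist_less_iff:
  assumes "i \<in> {1..n}" "j \<in> {1..n}" "z \<in> {1..n}" "i \<noteq> j" "z \<noteq> j"
  shows "cw_dist n i z < cw_dist n i j \<longleftrightarrow> cw_dist n j i \<le> cw_dist n j z"
  using assms by (auto simp: cw_dist_eq)

lemma cw_dist_cyc_prev_max:
  assumes "S \<subseteq> {1..n}" "i \<in> S" "z \<in> S"
  shows "cw_dist n i z \<le> cw_dist n i (cyc_prev S i)"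
proof -
  have fin: "finite S"
    using assms(1) finite_subset by blast
  have a: "cyc_prev S i \<in> S"
    using cyc_prev_in[OF fin] assms(2) by blast
  show ?thesis
  proof (cases "\<exists>y\<in>S. y < i")
    case True
    then have "cyc_prev S i < i" "z < i \<Longrightarrow> z \<le> cyc_prev S i"
      using cyc_prev_below[OF fin] assms(3) by blast+
    then show ?thesis
      using assms a by (auto simp: cw_dist_eq subset_eq)
  next
    case False
    then have "cyc_prev S i = Max S" "i \<le> z" "z \<le> Max S" "i \<le> Max S"
      using fin assms(2,3) by (auto simp: cyc_prev_def not_less)
    then show ?thesis
      using assms a by (auto simp: cw_dist_eq subset_eq)
  qed
qed

lemma cw_dist_cyc_next_min:
  assumes "S \<subseteq> {1..n}" "j \<in> {1..n}" "j \<notin> S" "z \<in> S"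
  shows "cw_dist n j (cyc_next S j) \<le> cw_dist n j z"
proof -
  have fin: "finite S"
    using assms(1) finite_subset by blast
  have s: "cyc_next S j \<in> S"
    using cyc_next_in[OF fin] assms(4) by blast
  show ?thesis
  proof (cases "\<exists>y\<in>S. j < y")
    case True
    then have "j < cyc_next S j" "j < z \<Longrightarrow> cyc_next S j \<le> z" "z \<noteq> j"
      using cyc_next_above[OF fin] assms(3,4) by blast+
    then show ?thesis
      using assms s by (auto simp: cw_dist_eq subset_eq)
  next
    case False
    then have "cyc_next S j = Min S" "z \<le> j" "z \<noteq> j" "Min S \<le> z"
      using fin assms(3,4) by (auto simp: cyc_next_def not_less)
    then show ?thesis
      using assms s by (auto simp: cw_dist_eq subset_eq)
  qed
qed

lemma cyc_next_iff_cw_dist: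
  assumes "S \<subseteq> {1..n}" "j \<in> {1..n}" "j \<notin> S" "i \<in> S"
  shows "i = cyc_next S j \<longleftrightarrow> (\<forall>z\<in>S. cw_dist n j i \<le> cw_dist n j z)"
proof
  assume "i = cyc_next S j"
  then show "\<forall>z\<in>S. cw_dist n j i \<le> cw_dist n j z"
    using cw_dist_cyc_next_min[OF assms(1-3)] by simp
next
  assume min: "\<forall>z\<in>S. cw_dist n j i \<le> cw_dist n j z"
  have s: "cyc_next S j \<in> S"
    using cyc_next_in[OF finite_subset[OF assms(1) finite_atLeastAtMost]] assms(4) by blast
  then have "cw_dist n j i \<le> cw_dist n j (cyc_next S j)"
    using min by blast
  moreover have "cw_dist n j (cyc_next S j) \<le> cw_dist n j i"
    using cw_dist_cyc_next_min[OF assms] .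
  ultimately have "cw_dist n j i = cw_dist n j (cyc_next S j)"
    by (rule order_antisym)
  moreover have "i \<in> {1..n}" "cyc_next S j \<in> {1..n}"
    using assms(1,4) s by blast+
  ultimately show "i = cyc_next S j"
    using cw_dist_eq_iff[OF assms(2)] by simp
qed

(* Both sides say that no point of S lies on the clockwise arc from j to i. *)
lemma cw_dist_cyc_prev_less_iff:
  assumes "S \<subseteq> {1..n}" "i \<in> S" "j \<in> {1..n}" "j \<notin> S"
  shows "cw_dist n i (cyc_prev S i) < cw_dist n i j \<longleftrightarrow> i = cyc_next S j"
proof -
  have i: "i \<in> {1..n}" "j \<noteq> i"
    using assms by auto
  have pointwise: "cw_dist n i z < cw_dist n i j \<longleftrightarrow> cw_dist n j i \<le> cw_dist n j z" if "z \<in> S" for z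
  proof -
    have "z \<in> {1..n}" "z \<noteq> j"
      using that assms(1,4) by auto
    then show ?thesis
      using cw_dist_less_iff[OF i(1) assms(3)] i(2) by simp
  qed
  have "cyc_prev S i \<in> S"
    using cyc_prev_in[OF finite_subset[OF assms(1) finite_atLeastAtMost]] assms(2) by blast
  then have "cw_dist n i (cyc_prev S i) < cw_dist n i j \<longleftrightarrow> (\<forall>z\<in>S. cw_dist n i z < cw_dist n i j)"
    using cw_dist_cyc_prev_max[OF assms(1,2)] order.strict_trans1 by blast
  also have "\<dots> \<longleftrightarrow> (\<forall>z\<in>S. cw_dist n j i \<le> cw_dist n j z)"
    using pointwise by blast
  also have "\<dots> \<longleftrightarrow> i = cyc_next S j"
    using cyc_next_iff_cw_dist[OF assms(1,3,4,2)] by simp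
  finally show ?thesis .
qed

lemma not_aligned_down_cycle_comp_fixed:
  assumes "2 \<le> n" "\<rho> permutes {1..n}" "i \<in> {1..n}" "j \<in> {1..n}" "\<rho> i = i"
  shows "\<not> aligned n (down_cycle {1..n} \<circ> \<rho>) i j"
proof -
  let ?\<pi> = "down_cycle {1..n} \<circ> \<rho>"
  have \<pi>_perm: "?\<pi> permutes {1..n}"
    using permutes_compose[OF assms(2) down_cycle_permutes[OF finite_atLeastAtMost order_refl]] .
  have \<pi>_in: "?\<pi> i \<in> {1..n}" "?\<pi> j \<in> {1..n}"
    using assms(3,4) permutes_in_image[OF \<pi>_perm] by simp_all
  have "cw_dist n i (?\<pi> i) = int n - 1"
    using cw_dist_down_cycle[OF assms(1,3,3)] assms(5) by simp
  moreover have "cw_dist n i (?\<pi> j) < int n"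
    using cw_dist_bounds assms(1) by simp
  ultimately show ?thesis
    using aligned_iff_cw_dist[OF assms(3,4) \<pi>_in] by linarith
qed

lemma aligned_down_cycle_iff:
  assumes "2 \<le> n" "S \<subseteq> {1..n}" "2 \<le> card S" "i \<in> {1..n}" "j \<in> {1..n}"
  shows "aligned n (down_cycle {1..n} \<circ> down_cycle S) i j \<longleftrightarrow> j \<notin> S \<and> i = cyc_next S j"
proof -
  define \<pi> where "\<pi> = down_cycle {1..n} \<circ> down_cycle S"
  define d where "d = cw_dist n i"
  have fin: "finite S"
    using assms(2) finite_subset by blast
  have nonempty: "S \<noteq> {}"
    using assms(3) by auto
  have S_perm: "down_cycle S permutes {1..n}"
    using down_cycle_permutes[OF fin assms(2)] .
  show ?thesis
    unfolding \<pi>_def[symmetric]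
  proof (cases "i \<in> S")
    case False
    then have "\<not> aligned n \<pi> i j"
      using not_aligned_down_cycle_comp_fixed[OF assms(1) S_perm assms(4,5)]
      by (simp add: \<pi>_def down_cycle_def)
    then show "aligned n \<pi> i j \<longleftrightarrow> j \<notin> S \<and> i = cyc_next S j"
      using False cyc_next_in[OF fin nonempty] by auto
  next
    case True
    have S_in: "down_cycle S x \<in> {1..n}" if "x \<in> {1..n}" for x
      using permutes_in_image[OF S_perm] that by simp
    have d_\<pi>: "d (\<pi> x) = (if down_cycle S x = i then int n - 1 else d (down_cycle S x) - 1)"
      if "x \<in> {1..n}" for x
      using cw_dist_down_cycle[OF assms(1,4) S_in[OF that]] by (simp add: \<pi>_def d_def)
    have \<pi>_perm: "\<pi> permutes {1..n}"
      unfolding \<pi>_def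
      using permutes_compose[OF S_perm down_cycle_permutes[OF finite_atLeastAtMost order_refl]] .
    have "\<pi> i \<in> {1..n}" "\<pi> j \<in> {1..n}"
      using assms(4,5) permutes_in_image[OF \<pi>_perm] by simp_all
    then have aligned: "aligned n \<pi> i j \<longleftrightarrow> d (\<pi> i) < d (\<pi> j) \<and> d (\<pi> j) < d j"
      using aligned_iff_cw_dist[OF assms(4,5)] by (simp add: d_def)
    define a where "a = cyc_prev S i"
    have "a \<in> S" "a \<noteq> i"
      using cyc_prev_in[OF fin nonempty] cyc_prev_neq[OF fin assms(3) True] by (auto simp: a_def)
    \<comment> \<open>\<open>\<pi> i\<close> is one step short of \<open>a\<close>, the point of \<open>S\<close> farthest clockwise from \<open>i\<close>\<close>
    then have d_\<pi>_i: "d (\<pi> i) = d a - 1"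
      using True d_\<pi>[OF assms(4)] by (simp add: down_cycle_def a_def)
    show "aligned n \<pi> i j \<longleftrightarrow> j \<notin> S \<and> i = cyc_next S j"
    proof (cases "j \<in> S")
      case True
      have "d j \<le> d a"
        using cw_dist_cyc_prev_max[OF assms(2) \<open>i \<in> S\<close> True] by (simp add: d_def a_def)
      then have "\<not> (d (\<pi> i) < d (\<pi> j) \<and> d (\<pi> j) < d j)"
        using d_\<pi>_i by linarith
      then show ?thesis
        using aligned True by simp
    next
      case False
      then have "d (\<pi> j) = d j - 1"
        using d_\<pi>[OF assms(5)] \<open>i \<in> S\<close> by (auto simp: down_cycle_def)
      then have "aligned n \<pi> i j \<longleftrightarrow> d a < d j"
        using aligned d_\<pi>_i by linarith
      also have "\<dots> \<longleftrightarrow> i = cyc_next S j"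
        using cw_dist_cyc_prev_less_iff[OF assms(2) True assms(5) False] by (simp add: d_def a_def)
      finally show ?thesis
        using False by simp
    qed
  qed
qed

lemma al_down_cycle:
  assumes "2 \<le> n" "S \<subseteq> {1..n}" "2 \<le> card S"
  shows "al n (down_cycle {1..n} \<circ> down_cycle S) = n - card S"
proof -
  let ?\<pi> = "down_cycle {1..n} \<circ> down_cycle S"
  let ?A = "{{i, j} | i j. i \<in> {1..n} \<and> j \<in> {1..n} \<and> (aligned n ?\<pi> i j \<or> aligned n ?\<pi> j i)}"
  have fin: "finite S"
    using assms(2) finite_subset by blast
  have "S \<noteq> {}"
    using assms(3) by auto
  then have next_in: "cyc_next S j \<in> S" for j
    using cyc_next_in[OF fin] by blast
  have "?A = (\<lambda>j. {cyc_next S j, j}) ` ({1..n} - S)"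
  proof (intro equalityI subsetI)
    fix X
    assume "X \<in> ?A"
    then obtain i j where X: "X = {i, j}" and ij: "i \<in> {1..n}" "j \<in> {1..n}"
      and "aligned n ?\<pi> i j \<or> aligned n ?\<pi> j i"
      by blast
    then have "j \<notin> S \<and> i = cyc_next S j \<or> i \<notin> S \<and> j = cyc_next S i"
      using aligned_down_cycle_iff[OF assms ij] aligned_down_cycle_iff[OF assms ij(2,1)] by simp
    then show "X \<in> (\<lambda>j. {cyc_next S j, j}) ` ({1..n} - S)"
    proof (elim disjE conjE)
      assume "j \<notin> S" "i = cyc_next S j"
      then show ?thesis
        using X ij by blast
    next
      assume "i \<notin> S" "j = cyc_next S i"
      then have "X = {cyc_next S i, i}" "i \<in> {1..n} - S"
        using X ij by auto
      then show ?thesis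
        by blast
    qed
  next
    fix X
    assume "X \<in> (\<lambda>j. {cyc_next S j, j}) ` ({1..n} - S)"
    then obtain j where j: "j \<in> {1..n}" "j \<notin> S" and X: "X = {cyc_next S j, j}"
      by blast
    have "cyc_next S j \<in> {1..n}"
      using next_in assms(2) by blast
    moreover have "aligned n ?\<pi> (cyc_next S j) j"
      using aligned_down_cycle_iff[OF assms calculation j(1)] j(2) by simp
    ultimately show "X \<in> ?A"
      using X j(1) by blast
  qed
  moreover have "inj_on (\<lambda>j. {cyc_next S j, j}) ({1..n} - S)"
  proof (rule inj_onI)
    fix x y
    assume "x \<in> {1..n} - S" "{cyc_next S x, x} = {cyc_next S y, y}"
    then have "x \<in> {cyc_next S y, y}" "x \<noteq> cyc_next S y"
      using next_in[of y] by blast+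
    then show "x = y"
      by blast
  qed
  ultimately have "al n ?\<pi> = card ({1..n} - S)"
    by (simp add: al_def card_image)
  then show ?thesis
    using card_Diff_subset[OF fin assms(2)] by simp
qed

lemma sum_card_subsets:
  fixes f :: "nat \<Rightarrow> 'a::comm_semiring_1"
  assumes "finite A"
  shows "(\<Sum>S\<in>{S. S \<subseteq> A \<and> k \<le> card S}. f (card S)) = (\<Sum>m = k..card A. of_nat (card A choose m) * f m)"
proof -
  let ?F = "{S. S \<subseteq> A \<and> k \<le> card S}"
  have fin: "finite ?F"
    by (rule finite_subset[of _ "Pow A"]) (use assms in auto)
  have "card ` ?F \<subseteq> {k..card A}"
  proof
    fix m
    assume "m \<in> card ` ?F"
    then obtain S where "S \<subseteq> A" "k \<le> card S" "m = card S"
      by blast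
    then show "m \<in> {k..card A}"
      using card_mono[OF assms] by simp
  qed
  then have "(\<Sum>S\<in>?F. f (card S)) = (\<Sum>m = k..card A. \<Sum>S\<in>{S\<in>?F. card S = m}. f (card S))"
    by (rule sum.group[OF fin finite_atLeastAtMost, symmetric])
  also have "\<dots> = (\<Sum>m = k..card A. of_nat (card A choose m) * f m)"
  proof (rule sum.cong[OF refl])
    fix m
    assume "m \<in> {k..card A}"
    then have "{S\<in>?F. card S = m} = {S. S \<subseteq> A \<and> card S = m}"
      by auto
    then have "(\<Sum>S\<in>{S\<in>?F. card S = m}. f (card S)) = (\<Sum>S\<in>{S. S \<subseteq> A \<and> card S = m}. f m)"
      by simp
    also have "\<dots> = of_nat (card A choose m) * f m"
      using n_subsets[OF assms, of m] by simp
    finally show "(\<Sum>S\<in>{S\<in>?F. card S = m}. f (card S)) = of_nat (card A choose m) * f m" .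
  qed
  finally show ?thesis .
qed

lemma E_2_eq_sum_subsets:
  assumes "2 \<le> n"
  shows "E 2 n q = (\<Sum>S | S \<subseteq> {1..n} \<and> 2 \<le> card S. q powi (int (card S) + int n - 4))"
proof -
  let ?F = "{S. S \<subseteq> {1..n} \<and> 2 \<le> card S}"
  have inj: "inj_on (\<lambda>S. down_cycle {1..n} \<circ> down_cycle S) ?F"
    by (rule inj_on_subset[OF inj_on_down_cycle_comp]) (auto intro: finite_subset)
  have "E 2 n q = (\<Sum>S\<in>?F. q powi (int (2 * (n - 2)) - int (al n (down_cycle {1..n} \<circ> down_cycle S))))"
    unfolding E_def wex_2_permutations[OF order.trans[OF one_le_numeral assms]]
    by (subst sum.reindex[OF inj]) (simp add: comp_def)
  also have "\<dots> = (\<Sum>S\<in>?F. q powi (int (card S) + int n - 4))"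
  proof (rule sum.cong[OF refl])
    fix S
    assume "S \<in> ?F"
    then have S: "S \<subseteq> {1..n}" "2 \<le> card S"
      by auto
    have "card S \<le> card {1..n}"
      by (rule card_mono[OF finite_atLeastAtMost S(1)])
    then have "int (2 * (n - 2)) - int (al n (down_cycle {1..n} \<circ> down_cycle S)) = int (card S) + int n - 4"
      using al_down_cycle[OF assms S] assms by simp
    then show "q powi (int (2 * (n - 2)) - int (al n (down_cycle {1..n} \<circ> down_cycle S))) =
        q powi (int (card S) + int n - 4)"
      by simp
  qed
  finally show ?thesis .
qed

lemma Ehat_2_eq_sum_subsets:
  assumes "2 \<le> n" "q \<noteq> 0"
  shows "Ehat 2 n q = (\<Sum>S | S \<subseteq> {1..n} \<and> 2 \<le> card S. q ^ (card S - 2))"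
proof -
  let ?F = "{S. S \<subseteq> {1..n} \<and> 2 \<le> card S}"
  have "Ehat 2 n q = (\<Sum>S\<in>?F. q powi (int 2 - int n) * q powi (int (card S) + int n - 4))"
    by (simp add: Ehat_def E_2_eq_sum_subsets[OF assms(1)] sum_distrib_left)
  also have "\<dots> = (\<Sum>S\<in>?F. q ^ (card S - 2))"
  proof (rule sum.cong[OF refl])
    fix S
    assume "S \<in> ?F"
    then have exponent: "(int 2 - int n) + (int (card S) + int n - 4) = int (card S - 2)"
      by auto
    have "q powi (int 2 - int n) * q powi (int (card S) + int n - 4) =
        q powi ((int 2 - int n) + (int (card S) + int n - 4))"
      by (rule power_int_add[symmetric]) (simp add: assms(2))
    also have "\<dots> = q ^ (card S - 2)"
      unfolding exponent by (rule power_int_of_nat)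
    finally show "q powi (int 2 - int n) * q powi (int (card S) + int n - 4) = q ^ (card S - 2)" .
  qed
  finally show ?thesis .
qed

theorem mainTheorem11:
  fixes n :: nat and q :: real
  assumes "n \<ge> 2" and "q \<noteq> 0"
  shows "Ehat 2 n q = (\<Sum>i = 0..n - 2. real (n choose (i + 2)) * q ^ i)"
proof -
  have "Ehat 2 n q = (\<Sum>m = 2..n. real (n choose m) * q ^ (m - 2))"
    using Ehat_2_eq_sum_subsets[OF assms]
      sum_card_subsets[OF finite_atLeastAtMost[of 1 n], where k = 2 and f = "\<lambda>m. q ^ (m - 2)"]
    by simp
  also have "\<dots> = (\<Sum>i = 0..n - 2. real (n choose (i + 2)) * q ^ i)"
  proof -
    have "{2..n} = {0 + 2..(n - 2) + 2}"
      using assms(1) by simp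
    then show ?thesis
      by (simp only: sum.shift_bounds_cl_nat_ivl) simp
  qed
  finally show ?thesis .
qed

end
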